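(* Let $A,B$ be smooth functions of $\rho$ on an interval containing $[\rho_-,\rho_+]$ with $A^2+B^2=1$ at $\rho=\rho_\pm$ and $A^2+B^2>1$ on $(\rho_-,\rho_+)$. Suppose $A<0$ on $(\rho_-,\rho_+)$, that $A(\rho)=-1$ for exactly two values $\rho_1<\rho_2$ in $(\rho_-,\rho_+)$, and that there is $\rho_0\in(\rho_1,\rho_2)$ with $B(\rho_0)=0$, $B>0$ on $(\rho_-,\rho_0)$ and $B<0$ on $(\rho_0,\rho_+)$. Then the $(+)$ family generates exactly one horizon, the circle $\rho=\rho_1$, and the $(-)$ family generates exactly one horizon, the circle $\rho=\rho_2$.
   Context: Acoustic metric in the plane with polar coordinates $(\rho,\varphi)$: Hamiltonian $H=(\tau+A\xi_\rho+B\xi_\varphi/\rho)^2-\xi_\rho^2-(\xi_\varphi/\rho)^2$, $A=A(\rho)$, $B=B(\rho)$. The ergoregion is the annulus $\rho_-<\rho<\rho_+$ where $A^2+B^2>1$. Zero-energy null geodesics are the null bicharacteristics with $\tau=0$ parametrized by $t$; on them $\xi_\rho=\frac{-AB\pm\sqrt{A^2+B^2-1}}{A^2-1}\,\xi_\varphi/\rho$, the sign defining the $(\pm)$ family. Writing $s=\sqrt{A^2+B^2-1}$, their equations of motion in the ergoregion are $$\frac{d\rho^\pm}{dt}=\frac{A(A^2+B^2-1)\pm Bs}{A^2+B^2},\qquad \frac{d\varphi^\pm}{dt}=\frac{s\,(Bs\mp A)}{\rho\,(A^2+B^2)}.$$ A horizon generated by the $(\pm)$ family is a circle $\{\rho=c\}$,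 $c\in(\rho_-,\rho_+)$, which is a closed trajectory of that family, i.e. $d\rho^\pm/dt=0$ and $d\varphi^\pm/dt\neq0$ at $\rho=c$. *)

theory Defs
  imports "HOL-Analysis.Analysis"
begin

definition smooth_on :: "real set \<Rightarrow> (real \<Rightarrow> real) \<Rightarrow> bool" where
  "smooth_on S f \<longleftrightarrow> open S \<and> (\<forall>n. \<forall>x\<in>S. ((deriv ^^ n) f) differentiable (at x))"

text \<open>Equations of motion of zero-energy null geodesics in the ergoregion.
  The sign sg is 1 for the (+) family and -1 for the (-) family.\<close>
definition s_fun :: "(real \<Rightarrow> real) \<Rightarrow> (real \<Rightarrow> real) \<Rightarrow> real \<Rightarrow> real" where
  "s_fun A B r = sqrt ((A r)^2 + (B r)^2 - 1)"

definition drho :: "(real \<Rightarrow> real) \<Rightarrow> (real \<Rightarrow> real) \<Rightarrow> real \<Rightarrow> real \<Rightarrow> real" where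
  "drho A B sg r =
     (A r * ((A r)^2 + (B r)^2 - 1) + sg * B r * s_fun A B r) / ((A r)^2 + (B r)^2)"

definition dphi :: "(real \<Rightarrow> real) \<Rightarrow> (real \<Rightarrow> real) \<Rightarrow> real \<Rightarrow> real \<Rightarrow> real" where
  "dphi A B sg r =
     s_fun A B r * (B r * s_fun A B r - sg * A r) / (r * ((A r)^2 + (B r)^2))"

text \<open>A horizon generated by the family with sign sg: a circle rho = c with c in the
  ergoregion (rm, rp) which is a closed trajectory of that family.\<close>
definition is_horizon ::
  "(real \<Rightarrow> real) \<Rightarrow> (real \<Rightarrow> real) \<Rightarrow> real \<Rightarrow> real \<Rightarrow> real \<Rightarrow> real \<Rightarrow> bool" where
  "is_horizon A B rm rp sg c \<longleftrightarrow>
     c \<in> {rm<..<rp} \<and> drho A B sg c = 0 \<and> dphi A B sg c \<noteq> 0"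

end

theory Submission
  imports Defs
begin

text \<open>In the ergoregion the numerator of \<open>d\<rho>/dt\<close> factorises as \<open>s (A s \<pm> B)\<close> with \<open>s > 0\<close>,
  and squaring \<open>A s = \<mp>B\<close> gives \<open>(A\<^sup>2 - 1)(A\<^sup>2 + B\<^sup>2) = 0\<close>. Hence, where \<open>A < 0\<close>, a
  circle is a closed trajectory of the \<open>(\<pm>)\<close> family exactly when \<open>A = -1\<close> and \<open>\<pm>B > 0\<close>
  there; at such a point \<open>s = \<bar>B\<bar>\<close> and \<open>d\<phi>/dt\<close> is automatically nonzero. Under the
  hypotheses \<open>A = -1\<close> only at \<open>\<rho>\<^sub>1 < \<rho>\<^sub>0 < \<rho>\<^sub>2\<close>, where \<open>B > 0\<close> and \<open>B < 0\<close> respectively.\<close>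

lemma drho_eq_0_iff:
  fixes sg c :: real
  assumes Aneg: "A c < 0" and ergo: "(A c)^2 + (B c)^2 > 1" and sg: "\<bar>sg\<bar> = 1"
  shows "drho A B sg c = 0 \<longleftrightarrow> A c = -1 \<and> sg * B c > 0"
proof -
  define a b s where "a = A c" and "b = B c" and "s = s_fun A B c"
  have s_pos: "s > 0" and s_sq: "s^2 = a^2 + b^2 - 1"
    using ergo by (simp_all add: s_def a_def b_def s_fun_def)
  have sg_sq: "sg^2 = 1" using sg by (metis abs_power2 power2_abs power_one)
  have "a * (a^2 + b^2 - 1) + sg * b * s = s * (a * s + sg * b)"
    by (subst s_sq[symmetric]) (simp add: power2_eq_square algebra_simps)
  then have "drho A B sg c = 0 \<longleftrightarrow> a * s + sg * b = 0"
    using s_pos ergo by (auto simp: drho_def a_def b_def s_def[symmetric])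
  also have "\<dots> \<longleftrightarrow> a = -1 \<and> sg * b > 0"
  proof
    assume root: "a * s + sg * b = 0"
    then have "a * s = - (sg * b)" by linarith
    then have "(a * s)^2 = (sg * b)^2" by simp
    then have "a^2 * (a^2 + b^2 - 1) = b^2" by (simp add: power_mult_distrib s_sq sg_sq)
    then have "(a^2 - 1) * (a^2 + b^2) = 0" by (simp add: algebra_simps power2_eq_square)
    then have "a^2 = 1" using ergo by (auto simp: a_def b_def)
    then have "a = -1" using Aneg a_def by (auto simp: power2_eq_1_iff)
    moreover have "sg * b > 0"
      using root mult_neg_pos[OF Aneg s_pos] by (simp add: a_def)
    ultimately show "a = -1 \<and> sg * b > 0" ..
  next
    assume "a = -1 \<and> sg * b > 0"
    moreover then have "s = \<bar>b\<bar>" by (simp add: s_def s_fun_def a_def b_def)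
    ultimately show "a * s + sg * b = 0" using sg by (auto simp: abs_if zero_less_mult_iff)
  qed
  finally show ?thesis by (simp add: a_def b_def)
qed

lemma dphi_neq_0:
  fixes sg c :: real
  assumes "A c = -1" and "sg * B c > 0" and "\<bar>sg\<bar> = 1" and "c \<noteq> 0"
  shows "dphi A B sg c \<noteq> 0"
proof -
  have "s_fun A B c = \<bar>B c\<bar>" using assms(1) by (simp add: s_fun_def)
  moreover have "B c * \<bar>B c\<bar> + sg = sg * ((B c)^2 + 1)"
    using assms(2,3) by (auto simp: abs_if power2_eq_square zero_less_mult_iff algebra_simps)
  moreover have "B c \<noteq> 0" "sg \<noteq> 0" "(B c)^2 + 1 \<noteq> 0"
    using assms(2,3) by (auto, smt (verit) zero_le_power2)
  ultimately show ?thesis using assms(1,4) by (simp add: dphi_def)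
qed

lemma is_horizon_iff:
  fixes sg rm rp :: real
  assumes "0 \<le> rm" and "\<bar>sg\<bar> = 1"
    and ergo: "\<forall>r\<in>{rm<..<rp}. (A r)^2 + (B r)^2 > 1"
    and Aneg: "\<forall>r\<in>{rm<..<rp}. A r < 0"
  shows "is_horizon A B rm rp sg c \<longleftrightarrow> c \<in> {rm<..<rp} \<and> A c = -1 \<and> sg * B c > 0"
proof (cases "c \<in> {rm<..<rp}")
  case True
  with assms drho_eq_0_iff[of A c B sg] dphi_neq_0[of A c sg B] show ?thesis
    by (auto simp: is_horizon_def)
qed (auto simp: is_horizon_def)

theorem theorem4p3:
  fixes A B :: "real \<Rightarrow> real" and rm rp r0 r1 r2 :: real and I :: "real set"
  assumes rad: "0 \<le> rm" and lt: "rm < rp"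
    and I: "is_interval I" "{rm..rp} \<subseteq> I"
    and smA: "smooth_on I A" and smB: "smooth_on I B"
    and bdry: "(A rm)^2 + (B rm)^2 = 1" "(A rp)^2 + (B rp)^2 = 1"
    and ergo: "\<forall>r\<in>{rm<..<rp}. (A r)^2 + (B r)^2 > 1"
    and Aneg: "\<forall>r\<in>{rm<..<rp}. A r < 0"
    and r12: "r1 < r2" "{r \<in> {rm<..<rp}. A r = -1} = {r1, r2}"
    and r0: "r0 \<in> {r1<..<r2}" "B r0 = 0"
    and Bpos: "\<forall>r\<in>{rm<..<r0}. B r > 0"
    and Bneg: "\<forall>r\<in>{r0<..<rp}. B r < 0"
  shows "{c. is_horizon A B rm rp 1 c} = {r1} \<and> {c. is_horizon A B rm rp (-1) c} = {r2}"
proof -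
  have r1: "r1 \<in> {rm<..<rp}" "A r1 = -1" and r2: "r2 \<in> {rm<..<rp}" "A r2 = -1"
    using r12(2) by blast+
  have "B r1 > 0" using Bpos r1 r0 by auto
  moreover have "B r2 < 0" using Bneg r2 r0 by auto
  moreover have "is_horizon A B rm rp sg c \<longleftrightarrow> (c = r1 \<or> c = r2) \<and> sg * B c > 0"
    if "\<bar>sg\<bar> = 1" for sg c
    using is_horizon_iff[OF rad that ergo Aneg] r12(2) by blast
  ultimately show ?thesis by auto
qed

end
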